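(* Let $(A,\mathfrak{m}_A)$ be a complete Noetherian local domain. Assume $A$ has a $\delta$-structure such that $\mathfrak{m}_A$ is generated by elements $p,x_1,\dots,x_n$ with $\delta(x_i)\in\mathfrak{m}_A$ for all $i$. Then for an ideal $I\subseteq A$ the following are equivalent: (1) $(A,I)$ is an orientable prism; (2) $I$ is generated by a distinguished element $d\in\mathfrak{m}_A$; (3) $I$ is generated by $p-f$ for some $f\in(x_1,\dots,x_n)$.
   Context: All rings are commutative $\mathbb{Z}_{(p)}$-algebras. A $\delta$-structure is $\delta:A\to A$ with $\delta(0)=\delta(1)=0$, $\delta(a+b)=\delta(a)+\delta(b)+\frac{a^p+b^p-(a+b)^p}{p}$, $\delta(ab)=a^p\delta(b)+b^p\delta(a)+p\delta(a)\delta(b)$, Frobenius lift $\varphi(a)=a^p+p\delta(a)$; $d$ is distinguished if $\delta(d)$ is a unit. A prism is a pair $(A,I)$ with $I$ locally free of rank one, $A$ derived $(p,I)$-complete and $p\in I+\varphi(I)A$; it is orientable if $I$ is principal. *)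

theory Defs
  imports Main "HOL-Computational_Algebra.Primes"
begin

definition is_ideal :: "'a::comm_ring_1 set \<Rightarrow> bool" where
  "is_ideal I \<longleftrightarrow> 0 \<in> I \<and> (\<forall>a\<in>I. \<forall>b\<in>I. a + b \<in> I) \<and> (\<forall>r. \<forall>a\<in>I. r * a \<in> I)"

definition gen_ideal :: "'a::comm_ring_1 set \<Rightarrow> 'a set" where
  "gen_ideal S = {y. \<exists>F c. finite F \<and> F \<subseteq> S \<and> y = (\<Sum>s\<in>F. c s * s)}"

definition ideal_pow :: "'a::comm_ring_1 set \<Rightarrow> nat \<Rightarrow> 'a set" where
  "ideal_pow J n = gen_ideal {y. \<exists>f. (\<forall>i<n. f i \<in> J) \<and> y = (\<Prod>i<n. f i)}"

definition unit_elem :: "'a::comm_ring_1 \<Rightarrow> bool" where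
  "unit_elem a \<longleftrightarrow> (\<exists>b. a * b = 1)"

definition noetherian_ring :: "'a::comm_ring_1 itself \<Rightarrow> bool" where
  "noetherian_ring _ \<longleftrightarrow> (\<forall>I::'a set. is_ideal I \<longrightarrow> (\<exists>F. finite F \<and> I = gen_ideal F))"

definition local_ring_with :: "'a::comm_ring_1 set \<Rightarrow> bool" where
  "local_ring_with m \<longleftrightarrow> is_ideal m \<and> m \<noteq> UNIV \<and> (\<forall>a. a \<notin> m \<longrightarrow> unit_elem a)"

definition adically_complete :: "'a::comm_ring_1 set \<Rightarrow> bool" where
  "adically_complete J \<longleftrightarrow>
     (\<forall>a::nat \<Rightarrow> 'a. (\<forall>k. a (Suc k) - a k \<in> ideal_pow J k) \<longrightarrow>
        (\<exists>!x. \<forall>k. x - a k \<in> ideal_pow J k))"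

definition Zp_local_algebra :: "nat \<Rightarrow> 'a::comm_ring_1 itself \<Rightarrow> bool" where
  "Zp_local_algebra p _ \<longleftrightarrow> (\<forall>k::int. \<not> int p dvd k \<longrightarrow> unit_elem (of_int k :: 'a))"

(* delta-structure; (a^p + b^p - (a+b)^p)/p is written with its integer coefficients *)
definition delta_structure :: "nat \<Rightarrow> ('a::comm_ring_1 \<Rightarrow> 'a) \<Rightarrow> bool" where
  "delta_structure p \<delta> \<longleftrightarrow> \<delta> 0 = 0 \<and> \<delta> 1 = 0 \<and>
     (\<forall>a b. \<delta> (a + b) = \<delta> a + \<delta> b
              - (\<Sum>k\<in>{1..<p}. of_nat ((p choose k) div p) * a ^ k * b ^ (p - k))) \<and>
     (\<forall>a b. \<delta> (a * b) = a ^ p * \<delta> b + b ^ p * \<delta> a + of_nat p * \<delta> a * \<delta> b)"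

definition frob :: "nat \<Rightarrow> ('a::comm_ring_1 \<Rightarrow> 'a) \<Rightarrow> 'a \<Rightarrow> 'a" where
  "frob p \<delta> a = a ^ p + of_nat p * \<delta> a"

definition distinguished :: "('a::comm_ring_1 \<Rightarrow> 'a) \<Rightarrow> 'a \<Rightarrow> bool" where
  "distinguished \<delta> d \<longleftrightarrow> unit_elem (\<delta> d)"

(* Derived f-completeness of A (Stacks 091S): T(A,f) = R lim (... --f--> A --f--> A) vanishes,
   i.e. lim = lim^1 = 0, i.e. the map (x_n) |-> (x_n - f x_(n+1)) on prod_n A is bijective. *)
definition derived_complete_elem :: "'a::comm_ring_1 \<Rightarrow> bool" where
  "derived_complete_elem f \<longleftrightarrow>
     (\<forall>y::nat \<Rightarrow> 'a. \<exists>!x::nat \<Rightarrow> 'a. \<forall>n. x n - f * x (Suc n) = y n)"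

definition derived_complete :: "'a::comm_ring_1 set \<Rightarrow> bool" where
  "derived_complete J \<longleftrightarrow> (\<forall>f\<in>J. derived_complete_elem f)"

(* I is (Zariski-)locally free of rank one: there are f_1..f_k generating the unit ideal
   such that I_(f_i) is free of rank one over A_(f_i) with basis g_i/1, written without
   localisations. *)
definition locally_free_rank_one :: "'a::comm_ring_1 set \<Rightarrow> bool" where
  "locally_free_rank_one I \<longleftrightarrow>
     (\<exists>F::'a set. finite F \<and> 1 \<in> gen_ideal F \<and>
        (\<forall>f\<in>F. \<exists>g\<in>I.
           (\<forall>y\<in>I. \<exists>N c. f ^ N * y = c * g) \<and>
           (\<forall>c. (\<exists>M. f ^ M * (c * g) = 0) \<longrightarrow> (\<exists>K. f ^ K * c = 0))))"

definition prism :: "nat \<Rightarrow> ('a::comm_ring_1 \<Rightarrow> 'a) \<Rightarrow> 'a set \<Rightarrow> bool" where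
  "prism p \<delta> I \<longleftrightarrow> is_ideal I \<and> locally_free_rank_one I \<and>
     derived_complete (gen_ideal (insert (of_nat p) I)) \<and>
     of_nat p \<in> gen_ideal (I \<union> frob p \<delta> ` I)"

definition orientable_prism :: "nat \<Rightarrow> ('a::comm_ring_1 \<Rightarrow> 'a) \<Rightarrow> 'a set \<Rightarrow> bool" where
  "orientable_prism p \<delta> I \<longleftrightarrow> prism p \<delta> I \<and> (\<exists>d. I = gen_ideal {d})"

end

theory Submission
  imports Defs
begin

text \<open>
  The elements \<open>a \<in> m\<close> with \<open>\<delta> a \<in> m\<close> form an ideal, which contains the \<open>x\<^sub>i\<close> and \<open>m\<^sup>2\<close> but not \<open>p\<close>, since
  \<open>\<delta>(p) = 1 - p\<^sup>p\<^sup>-\<^sup>1\<close> is a unit.  Hence an element of \<open>m\<close> is distinguished iff it lies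
  outside this ideal, which gives (2) \<open>\<longleftrightarrow>\<close> (3) at once, and (1) \<open>\<Longrightarrow>\<close> (2) because
  \<open>p \<in> (d, \<phi>(d))\<close> with \<open>\<delta>(d) \<in> m\<close> would make \<open>p\<close> a multiple of \<open>d\<close>.  Conversely
  \<open>p = \<delta>(d)\<^sup>-\<^sup>1(\<phi>(d) - d\<^sup>p)\<close>, and derived completeness comes from \<open>m\<close>-adic completeness
  by summing geometric series \<open>\<Sum> f\<^sup>k y\<^sub>n\<^sub>+\<^sub>k\<close>.
\<close>

lemma is_ideal_zero: "is_ideal I \<Longrightarrow> 0 \<in> I"
  unfolding is_ideal_def by blast

lemma is_ideal_add: "is_ideal I \<Longrightarrow> a \<in> I \<Longrightarrow> b \<in> I \<Longrightarrow> a + b \<in> I"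
  unfolding is_ideal_def by blast

lemma is_ideal_mult_left: "is_ideal I \<Longrightarrow> a \<in> I \<Longrightarrow> r * a \<in> I"
  unfolding is_ideal_def by blast

lemma is_ideal_mult_right: "is_ideal I \<Longrightarrow> a \<in> I \<Longrightarrow> a * r \<in> I"
  unfolding is_ideal_def by (metis mult.commute)

lemma is_ideal_diff: "is_ideal I \<Longrightarrow> a \<in> I \<Longrightarrow> b \<in> I \<Longrightarrow> a - b \<in> I"
  unfolding is_ideal_def by (metis add_uminus_conv_diff mult_minus1)

lemma is_ideal_sum: "is_ideal I \<Longrightarrow> (\<And>s. s \<in> F \<Longrightarrow> g s \<in> I) \<Longrightarrow> sum g F \<in> I"
  by (induction F rule: infinite_finite_induct) (auto intro: is_ideal_add is_ideal_zero)

lemma is_ideal_power: "is_ideal I \<Longrightarrow> a \<in> I \<Longrightarrow> 0 < k \<Longrightarrow> a ^ k \<in> I"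
  by (metis is_ideal_mult_right power.simps(2) gr0_conv_Suc)

lemma is_ideal_one_imp_UNIV: "is_ideal I \<Longrightarrow> 1 \<in> I \<Longrightarrow> I = UNIV"
  using is_ideal_mult_right[of I 1] by force

lemma is_ideal_gen_ideal: "is_ideal (gen_ideal S)"
  unfolding is_ideal_def
proof (intro conjI ballI allI)
  show "0 \<in> gen_ideal S"
    unfolding gen_ideal_def by (intro CollectI exI[of _ "{}"]) auto
next
  fix a b assume "a \<in> gen_ideal S" "b \<in> gen_ideal S"
  then obtain F1 c1 F2 c2 where 1: "finite F1" "F1 \<subseteq> S" "a = (\<Sum>s\<in>F1. c1 s * s)"
    and 2: "finite F2" "F2 \<subseteq> S" "b = (\<Sum>s\<in>F2. c2 s * s)"
    unfolding gen_ideal_def by blast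
  define c where "c s = (if s \<in> F1 then c1 s else 0) + (if s \<in> F2 then c2 s else 0)" for s
  have "(\<Sum>s\<in>F1 \<union> F2. c s * s)
      = (\<Sum>s\<in>F1 \<union> F2. if s \<in> F1 then c1 s * s else 0) + (\<Sum>s\<in>F1 \<union> F2. if s \<in> F2 then c2 s * s else 0)"
    unfolding c_def sum.distrib[symmetric] by (rule sum.cong) (auto simp: distrib_right)
  also have "\<dots> = a + b"
    using 1 2 by (simp add: sum.inter_restrict[symmetric] Int_absorb1 Int_absorb2 Int_commute)
  finally show "a + b \<in> gen_ideal S"
    unfolding gen_ideal_def using 1 2 by (intro CollectI exI[of _ "F1 \<union> F2"] exI[of _ c]) auto
next
  fix r a assume "a \<in> gen_ideal S"
  then obtain F c where "finite F" "F \<subseteq> S" "a = (\<Sum>s\<in>F. c s * s)"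
    unfolding gen_ideal_def by blast
  then show "r * a \<in> gen_ideal S"
    unfolding gen_ideal_def
    by (intro CollectI exI[of _ F] exI[of _ "\<lambda>s. r * c s"]) (auto simp: sum_distrib_left mult.assoc)
qed

lemma gen_ideal_least: "is_ideal J \<Longrightarrow> S \<subseteq> J \<Longrightarrow> gen_ideal S \<subseteq> J"
  unfolding gen_ideal_def by (auto intro!: is_ideal_sum is_ideal_mult_left)

lemma gen_ideal_generators: "S \<subseteq> gen_ideal S"
proof
  fix s assume "s \<in> S"
  then show "s \<in> gen_ideal S"
    unfolding gen_ideal_def by (intro CollectI exI[of _ "{s}"] exI[of _ "\<lambda>_. 1"]) auto
qed

lemma gen_ideal_mono: "S \<subseteq> T \<Longrightarrow> gen_ideal S \<subseteq> gen_ideal T"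
  using gen_ideal_least[OF is_ideal_gen_ideal] gen_ideal_generators by blast

lemma gen_ideal_singleton: "gen_ideal {d} = range (\<lambda>r. r * d)"
proof
  have "is_ideal (range (\<lambda>r. r * d))"
    unfolding is_ideal_def
    by (auto simp: distrib_right[symmetric] intro: range_eqI[of _ _ 0]) (metis mult.assoc rangeI)
  then show "gen_ideal {d} \<subseteq> range (\<lambda>r. r * d)"
    by (rule gen_ideal_least) (auto intro: range_eqI[of _ _ 1])
  show "range (\<lambda>r. r * d) \<subseteq> gen_ideal {d}"
    using gen_ideal_generators[of "{d}"] is_ideal_mult_left[OF is_ideal_gen_ideal] by blast
qed

lemma gen_ideal_insertE:
  assumes "y \<in> gen_ideal (insert a X)"
  obtains r g where "g \<in> gen_ideal X" "y = r * a + g"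
proof -
  obtain F c where F: "finite F" "F \<subseteq> insert a X" "y = (\<Sum>s\<in>F. c s * s)"
    using assms unfolding gen_ideal_def by blast
  let ?r = "if a \<in> F then c a else 0"
  have "(\<Sum>s\<in>F - {a}. c s * s) \<in> gen_ideal X"
    unfolding gen_ideal_def using F by (intro CollectI exI[of _ "F - {a}"] exI[of _ c]) auto
  moreover have "y = ?r * a + (\<Sum>s\<in>F - {a}. c s * s)"
    using F by (simp add: sum.remove)
  ultimately show thesis by (rule that)
qed

lemma gen_ideal_pairE:
  assumes "y \<in> gen_ideal {a, b}"
  obtains r s where "y = r * a + s * b"
  using assms by (metis gen_ideal_insertE gen_ideal_singleton imageE)

lemma gen_ideal_singleton_unit_mult:
  assumes "unit_elem u"
  shows "gen_ideal {u * y} = gen_ideal {y}"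
proof -
  obtain v where "u * v = 1" using assms unfolding unit_elem_def by blast
  then have "r * y = (r * v) * (u * y)" for r
    by (metis mult.assoc mult.commute mult_1_right)
  then show ?thesis
    unfolding gen_ideal_singleton by (auto simp: mult.assoc[symmetric])
qed

lemma local_ring_unit_iff: "local_ring_with m \<Longrightarrow> unit_elem a \<longleftrightarrow> a \<notin> m"
  unfolding local_ring_with_def unit_elem_def
  by (metis is_ideal_mult_right is_ideal_one_imp_UNIV)

lemma local_ring_one_minus_not_mem: "local_ring_with m \<Longrightarrow> a \<in> m \<Longrightarrow> 1 - a \<notin> m"
  unfolding local_ring_with_def by (metis diff_add_cancel is_ideal_add is_ideal_one_imp_UNIV)

lemma frob_mult: "delta_structure p \<delta> \<Longrightarrow> frob p \<delta> (a * b) = frob p \<delta> a * frob p \<delta> b"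
  unfolding delta_structure_def frob_def by (simp add: algebra_simps power_mult_distrib)

lemma frob_eq_power_plus: "0 < p \<Longrightarrow> frob p \<delta> d = d ^ (p - 1) * d + of_nat p * \<delta> d"
  unfolding frob_def by (metis power_minus_mult)

text \<open>The natural number \<open>e\<close> is the Fermat quotient \<open>(k\<^sup>p - k)/p\<close>.\<close>

lemma delta_of_nat:
  assumes delta: "delta_structure p \<delta>" and "prime p"
  shows "\<exists>e. \<delta> (of_nat k) = - of_nat e \<and> p * e + k = k ^ p"
proof (induction k)
  case 0
  show ?case
    using delta prime_gt_0_nat[OF \<open>prime p\<close>]
    by (intro exI[of _ 0]) (simp add: delta_structure_def)
next
  case (Suc k)
  then obtain e where e: "\<delta> (of_nat k) = - of_nat e" "p * e + k = k ^ p" by blast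
  define e' where "e' = e + (\<Sum>j\<in>{1..<p}. (p choose j) div p * k ^ j)"
  have choose_div: "p * ((p choose j) div p) = p choose j" if "j \<in> {1..<p}" for j
    using dvd_choose_prime[of j p] that \<open>prime p\<close> by auto
  have "(k + 1) ^ p = (\<Sum>j\<le>p. (p choose j) * k ^ j)"
    using binomial_ring[of k 1 p] by simp
  also have "{..p} = insert p (insert 0 {1..<p})"
    using prime_gt_0_nat[OF \<open>prime p\<close>] by auto
  also have "(\<Sum>j\<in>insert p (insert 0 {1..<p}). (p choose j) * k ^ j)
      = k ^ p + 1 + (\<Sum>j\<in>{1..<p}. p * ((p choose j) div p) * k ^ j)"
    using prime_gt_0_nat[OF \<open>prime p\<close>] by (simp add: choose_div)
  finally have "p * e' + Suc k = Suc k ^ p"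
    using e(2) by (simp add: e'_def sum_distrib_left algebra_simps)
  moreover have "\<delta> (of_nat (Suc k)) = - of_nat e'"
    using delta e(1) unfolding delta_structure_def by (simp add: e'_def add.commute[of 1])
  ultimately show ?case by blast
qed

lemma delta_of_prime:
  assumes "delta_structure p \<delta>" "prime p"
  shows "\<delta> (of_nat p) = 1 - of_nat p ^ (p - 1)"
proof -
  obtain e where e: "\<delta> (of_nat p) = - of_nat e" "p * e + p = p ^ p"
    using delta_of_nat[OF assms] by blast
  have "p * (e + 1) = p * p ^ (p - 1)"
    using e(2) prime_gt_0_nat[OF \<open>prime p\<close>] by (simp add: power_eq_if)
  then have "e + 1 = p ^ (p - 1)"
    using prime_gt_0_nat[OF \<open>prime p\<close>] by (metis mult_cancel_left not_gr0)
  then show ?thesis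
    using e(1) by (metis add_diff_cancel_right' minus_diff_eq of_nat_1 of_nat_add of_nat_power)
qed

lemma distinguished_imp_p_mem_gen_ideal_frob:
  assumes "0 < p" "distinguished \<delta> d"
  shows "of_nat p \<in> gen_ideal {d, frob p \<delta> d}"
proof -
  obtain u where u: "\<delta> d * u = 1"
    using assms(2) unfolding distinguished_def unit_elem_def by blast
  have "of_nat p = of_nat p * (\<delta> d * u)"
    using u by simp
  also have "\<dots> = u * frob p \<delta> d - (u * d ^ (p - 1)) * d"
    unfolding frob_eq_power_plus[OF \<open>0 < p\<close>] by (simp add: algebra_simps)
  also have "\<dots> \<in> gen_ideal {d, frob p \<delta> d}"
    using gen_ideal_generators[of "{d, frob p \<delta> d}"]
    by (intro is_ideal_diff is_ideal_mult_left is_ideal_gen_ideal) auto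
  finally show ?thesis .
qed

lemma gen_ideal_principal_union_frob:
  assumes "delta_structure p \<delta>"
  shows "gen_ideal (gen_ideal {d} \<union> frob p \<delta> ` gen_ideal {d}) = gen_ideal {d, frob p \<delta> d}"
proof
  have "frob p \<delta> (r * d) \<in> gen_ideal {d, frob p \<delta> d}" for r
    unfolding frob_mult[OF assms] using gen_ideal_generators[of "{d, frob p \<delta> d}"]
    by (intro is_ideal_mult_left is_ideal_gen_ideal) auto
  moreover have "gen_ideal {d} \<subseteq> gen_ideal {d, frob p \<delta> d}"
    by (rule gen_ideal_mono) auto
  ultimately show "gen_ideal (gen_ideal {d} \<union> frob p \<delta> ` gen_ideal {d}) \<subseteq> gen_ideal {d, frob p \<delta> d}"
    by (intro gen_ideal_least is_ideal_gen_ideal) (auto simp: gen_ideal_singleton)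
  have "d \<in> gen_ideal {d}"
    using gen_ideal_generators by blast
  then show "gen_ideal {d, frob p \<delta> d} \<subseteq> gen_ideal (gen_ideal {d} \<union> frob p \<delta> ` gen_ideal {d})"
    by (intro gen_ideal_mono) auto
qed

lemma is_ideal_ideal_pow: "is_ideal (ideal_pow J k)"
  unfolding ideal_pow_def by (rule is_ideal_gen_ideal)

lemma power_mem_ideal_pow: "f \<in> J \<Longrightarrow> f ^ k \<in> ideal_pow J k"
  unfolding ideal_pow_def
  by (rule subsetD[OF gen_ideal_generators]) (auto intro!: exI[of _ "\<lambda>_. f"])

lemma ideal_pow_Suc_subset: "ideal_pow J (Suc k) \<subseteq> ideal_pow J k"
  unfolding ideal_pow_def[of J "Suc k"]
proof (rule gen_ideal_least[OF is_ideal_ideal_pow], safe)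
  fix g assume "\<forall>i<Suc k. g i \<in> J"
  then have "(\<Prod>i<k. g i) \<in> ideal_pow J k"
    unfolding ideal_pow_def by (intro subsetD[OF gen_ideal_generators]) (auto intro!: exI[of _ g])
  then show "(\<Prod>i<Suc k. g i) \<in> ideal_pow J k"
    by (simp add: is_ideal_mult_right[OF is_ideal_ideal_pow])
qed

lemma adically_complete_separated:
  assumes "adically_complete J" "\<And>k. z \<in> ideal_pow J k"
  shows "z = 0"
proof -
  have zero: "\<forall>k. (0::'a) \<in> ideal_pow J k"
    by (simp add: is_ideal_zero[OF is_ideal_ideal_pow])
  have "\<exists>!x. \<forall>k. x - (\<lambda>_. 0::'a) k \<in> ideal_pow J k"
    using spec[OF assms(1)[unfolded adically_complete_def], of "\<lambda>_. 0"] zero by simp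
  then show ?thesis
    using zero assms(2) by auto
qed

lemma adically_complete_infinitely_divisible_zero:
  assumes "adically_complete J" "f \<in> J" "\<And>n. w n = f * w (Suc n)"
  shows "w n = 0"
proof (rule adically_complete_separated[OF assms(1)])
  fix k
  have "w n = f ^ k * w (n + k)"
  proof (induction k)
    case (Suc k)
    then show ?case
      using assms(3)[of "n + k"] by (simp add: mult.assoc)
  qed simp
  then show "w n \<in> ideal_pow J k"
    using is_ideal_mult_right[OF is_ideal_ideal_pow power_mem_ideal_pow[OF assms(2)]] by metis
qed

text \<open>The solution is \<open>x\<^sub>n = \<Sum>\<^sub>k f\<^sup>k y\<^sub>n\<^sub>+\<^sub>k\<close>, the series converging \<open>J\<close>-adically.\<close>

lemma adically_complete_imp_derived_complete_elem:
  assumes complete: "adically_complete J" and "f \<in> J"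
  shows "derived_complete_elem f"
  unfolding derived_complete_elem_def
proof
  fix y :: "nat \<Rightarrow> 'a"
  define s where "s n K = (\<Sum>k<K. f ^ k * y (n + k))" for n K
  have s_Suc: "s n (Suc K) = y n + f * s (Suc n) K" for n K
    unfolding s_def sum.lessThan_Suc_shift by (simp add: sum_distrib_left mult.assoc)
  have "\<exists>x. \<forall>K. x - s n K \<in> ideal_pow J K" for n
  proof -
    have "s n (Suc K) - s n K \<in> ideal_pow J K" for K
      unfolding s_def
      by (simp add: is_ideal_mult_right[OF is_ideal_ideal_pow power_mem_ideal_pow[OF \<open>f \<in> J\<close>]])
    then show ?thesis
      using complete unfolding adically_complete_def by blast
  qed
  then obtain x where x: "\<And>n K. x n - s n K \<in> ideal_pow J K"
    by metis
  show "\<exists>!x. \<forall>n. x n - f * x (Suc n) = y n"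
  proof (rule ex_ex1I)
    have "x n - f * x (Suc n) - y n = 0" for n
    proof (rule adically_complete_separated[OF complete])
      fix K
      have "x n - f * x (Suc n) - y n = (x n - s n (Suc K)) - f * (x (Suc n) - s (Suc n) K)"
        by (simp add: s_Suc algebra_simps)
      also have "\<dots> \<in> ideal_pow J K"
        using x[of n "Suc K"] ideal_pow_Suc_subset
        by (blast intro: is_ideal_diff[OF is_ideal_ideal_pow _ is_ideal_mult_left[OF is_ideal_ideal_pow x]])
      finally show "x n - f * x (Suc n) - y n \<in> ideal_pow J K" .
    qed
    then show "\<exists>x. \<forall>n. x n - f * x (Suc n) = y n"
      by auto
  next
    fix x1 x2
    assume x1: "\<forall>n. x1 n - f * x1 (Suc n) = y n" and x2: "\<forall>n. x2 n - f * x2 (Suc n) = y n"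
    have diff_Suc: "x1 n - x2 n = f * (x1 (Suc n) - x2 (Suc n))" for n
    proof -
      have "x1 n - x2 n
          = (x1 n - f * x1 (Suc n)) - (x2 n - f * x2 (Suc n)) + f * (x1 (Suc n) - x2 (Suc n))"
        by (simp add: algebra_simps)
      also have "\<dots> = f * (x1 (Suc n) - x2 (Suc n))"
        using x1 x2 by simp
      finally show ?thesis .
    qed
    have "x1 n - x2 n = 0" for n
      using adically_complete_infinitely_divisible_zero[of J f "\<lambda>n. x1 n - x2 n", OF complete \<open>f \<in> J\<close> diff_Suc] .
    then show "x1 = x2"
      by auto
  qed
qed

lemma not_derived_complete_elem_one: "\<not> derived_complete_elem (1::'a::comm_ring_1)"
proof
  assume "derived_complete_elem (1::'a)"
  then have "\<exists>!x::nat \<Rightarrow> 'a. \<forall>n. x n - 1 * x (Suc n) = (\<lambda>_. 0) n"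
    unfolding derived_complete_elem_def by (rule spec)
  then have "Uniq (\<lambda>x::nat \<Rightarrow> 'a. \<forall>n. x n = x (Suc n))"
    by (simp add: ex1_iff_ex_Uniq)
  from Uniq_D[OF this, of "\<lambda>_. 0" "\<lambda>_. 1"] show False
    by (simp add: fun_eq_iff)
qed

locale local_delta_ring =
  fixes p :: nat and \<delta> :: "'a::comm_ring_1 \<Rightarrow> 'a" and m :: "'a set"
  assumes prime_p: "prime p"
    and local_m: "local_ring_with m"
    and delta: "delta_structure p \<delta>"
    and p_mem: "of_nat p \<in> m"
begin

lemma p_pos: "0 < p"
  using prime_gt_0_nat[OF prime_p] .

lemma is_ideal_m: "is_ideal m"
  using local_m unfolding local_ring_with_def by blast

lemma delta_add_congruence:
  assumes "a \<in> m"
  shows "\<delta> (a + b) - \<delta> a - \<delta> b \<in> m"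
proof -
  have "\<delta> (a + b) - \<delta> a - \<delta> b = - (\<Sum>k\<in>{1..<p}. of_nat ((p choose k) div p) * a ^ k * b ^ (p - k))"
    using delta unfolding delta_structure_def by (simp add: algebra_simps)
  also have "\<dots> \<in> m"
    using is_ideal_m assms
    by (intro is_ideal_diff[of m 0, simplified] is_ideal_sum is_ideal_mult_left is_ideal_mult_right
        is_ideal_power is_ideal_zero) auto
  finally show ?thesis .
qed

definition delta_ideal :: "'a set" where
  "delta_ideal = {a \<in> m. \<delta> a \<in> m}"

lemma is_ideal_delta_ideal: "is_ideal delta_ideal"
proof -
  have "0 \<in> delta_ideal"
    using delta is_ideal_zero[OF is_ideal_m] unfolding delta_ideal_def delta_structure_def by auto
  moreover have "a + b \<in> delta_ideal" if "a \<in> delta_ideal" "b \<in> delta_ideal" for a b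
    using that delta_add_congruence[of a b] is_ideal_m unfolding delta_ideal_def
    by (metis (mono_tags, lifting) diff_add_cancel is_ideal_add mem_Collect_eq)
  moreover have "r * a \<in> delta_ideal" if "a \<in> delta_ideal" for r a
  proof -
    have a: "a \<in> m" "\<delta> a \<in> m" "a ^ p \<in> m"
      using that is_ideal_power[OF is_ideal_m _ p_pos] by (auto simp: delta_ideal_def)
    have "\<delta> (r * a) = r ^ p * \<delta> a + a ^ p * \<delta> r + of_nat p * \<delta> r * \<delta> a"
      using delta by (simp add: delta_structure_def)
    also have "\<dots> \<in> m"
      using a by (blast intro: is_ideal_add[OF is_ideal_m] is_ideal_mult_left[OF is_ideal_m]
          is_ideal_mult_right[OF is_ideal_m])
    finally show ?thesis
      using a is_ideal_mult_left[OF is_ideal_m] unfolding delta_ideal_def by blast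
  qed
  ultimately show ?thesis
    unfolding is_ideal_def by blast
qed

lemma mult_mem_delta_ideal:
  assumes "a \<in> m" "b \<in> m"
  shows "a * b \<in> delta_ideal"
proof -
  have pow: "a ^ p \<in> m" "b ^ p \<in> m"
    using assms is_ideal_power[OF is_ideal_m _ p_pos] by auto
  have "\<delta> (a * b) = a ^ p * \<delta> b + b ^ p * \<delta> a + of_nat p * \<delta> a * \<delta> b"
    using delta by (simp add: delta_structure_def)
  also have "\<dots> \<in> m"
    using pow p_mem by (blast intro: is_ideal_add[OF is_ideal_m] is_ideal_mult_right[OF is_ideal_m])
  finally show ?thesis
    using assms is_ideal_mult_right[OF is_ideal_m] unfolding delta_ideal_def by blast
qed

lemma p_not_mem_delta_ideal: "of_nat p \<notin> delta_ideal"
proof -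
  have "of_nat p ^ (p - 1) \<in> m"
    using prime_ge_2_nat[OF prime_p] by (intro is_ideal_power[OF is_ideal_m p_mem]) simp
  then have "\<delta> (of_nat p) \<notin> m"
    unfolding delta_of_prime[OF delta prime_p] by (rule local_ring_one_minus_not_mem[OF local_m])
  then show ?thesis
    unfolding delta_ideal_def by blast
qed

lemma distinguished_iff_not_mem_delta_ideal:
  "d \<in> m \<Longrightarrow> distinguished \<delta> d \<longleftrightarrow> d \<notin> delta_ideal"
  unfolding distinguished_def delta_ideal_def local_ring_unit_iff[OF local_m] by blast

lemma principal_prism_generator_mem:
  assumes "derived_complete (gen_ideal (insert (of_nat p) (gen_ideal {d})))"
  shows "d \<in> m"
proof (rule ccontr)
  assume "d \<notin> m"
  then obtain e where "d * e = 1"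
    using local_ring_unit_iff[OF local_m] unfolding unit_elem_def by blast
  then have "1 \<in> gen_ideal {d}"
    unfolding gen_ideal_singleton by (metis mult.commute rangeI)
  then have "1 \<in> gen_ideal (insert (of_nat p) (gen_ideal {d}))"
    using gen_ideal_generators by blast
  then show False
    using assms not_derived_complete_elem_one unfolding derived_complete_def by blast
qed

lemma distinguished_if_p_mem_gen_ideal_frob:
  assumes "d \<in> m" "of_nat p \<in> gen_ideal {d, frob p \<delta> d}"
  shows "distinguished \<delta> d"
proof (rule ccontr)
  assume "\<not> distinguished \<delta> d"
  then have d: "d \<in> delta_ideal"
    using assms(1) distinguished_iff_not_mem_delta_ideal by blast
  obtain a b where pab: "of_nat p = a * d + b * frob p \<delta> d"
    using assms(2) by (rule gen_ideal_pairE)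
  have "1 - b * \<delta> d \<notin> m"
    using d is_ideal_mult_left[OF is_ideal_m] local_ring_one_minus_not_mem[OF local_m]
    unfolding delta_ideal_def by blast
  then obtain w where w: "(1 - b * \<delta> d) * w = 1"
    using local_ring_unit_iff[OF local_m] unfolding unit_elem_def by blast
  have "of_nat p * (1 - b * \<delta> d) = (a * d + b * frob p \<delta> d) - b * (of_nat p * \<delta> d)"
    by (simp only: pab[symmetric]) (simp add: algebra_simps)
  also have "\<dots> = (a + b * d ^ (p - 1)) * d"
    unfolding frob_eq_power_plus[OF p_pos] by (simp add: algebra_simps)
  finally have "of_nat p * (1 - b * \<delta> d) = (a + b * d ^ (p - 1)) * d" .
  then have "of_nat p = (w * (a + b * d ^ (p - 1))) * d"
    using w by (metis mult.assoc mult.commute mult_1_right)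
  then have "of_nat p \<in> delta_ideal"
    using is_ideal_mult_left[OF is_ideal_delta_ideal d] by simp
  then show False
    using p_not_mem_delta_ideal by blast
qed

lemma orientable_prism_imp_distinguished:
  assumes "orientable_prism p \<delta> I"
  shows "\<exists>d\<in>m. distinguished \<delta> d \<and> I = gen_ideal {d}"
proof -
  obtain d where I: "I = gen_ideal {d}"
    and complete: "derived_complete (gen_ideal (insert (of_nat p) I))"
    and p_mem_I: "of_nat p \<in> gen_ideal (I \<union> frob p \<delta> ` I)"
    using assms unfolding orientable_prism_def prism_def by blast
  have "d \<in> m"
    using principal_prism_generator_mem complete unfolding I .
  moreover have "distinguished \<delta> d"
    using distinguished_if_p_mem_gen_ideal_frob[OF \<open>d \<in> m\<close>] p_mem_I
    unfolding I gen_ideal_principal_union_frob[OF delta] .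
  ultimately show ?thesis
    using I by blast
qed

end

lemma locally_free_rank_one_principal:
  fixes d :: "'a::idom"
  assumes "d \<noteq> 0"
  shows "locally_free_rank_one (gen_ideal {d})"
  unfolding locally_free_rank_one_def
proof (intro exI[of _ "{1}"] conjI ballI)
  show "1 \<in> gen_ideal {1::'a}"
    using gen_ideal_generators by blast
  fix f :: 'a assume "f \<in> {1}"
  then show "\<exists>g\<in>gen_ideal {d}. (\<forall>y\<in>gen_ideal {d}. \<exists>N c. f ^ N * y = c * g) \<and>
      (\<forall>c. (\<exists>M. f ^ M * (c * g) = 0) \<longrightarrow> (\<exists>K. f ^ K * c = 0))"
    using assms by (intro bexI[of _ d]) (auto simp: gen_ideal_singleton)
qed simp

lemma distinguished_imp_orientable_prism:
  fixes \<delta> :: "'a::idom \<Rightarrow> 'a"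
  assumes "local_delta_ring p \<delta> m" "adically_complete m" "d \<in> m" "distinguished \<delta> d"
  shows "orientable_prism p \<delta> (gen_ideal {d})"
proof -
  interpret local_delta_ring p \<delta> m
    by fact
  have "d \<noteq> 0"
    using \<open>distinguished \<delta> d\<close> delta
    unfolding distinguished_def unit_elem_def delta_structure_def by auto
  have "gen_ideal (insert (of_nat p) (gen_ideal {d})) \<subseteq> m"
    using p_mem \<open>d \<in> m\<close>
    by (intro gen_ideal_least is_ideal_m) (auto simp: gen_ideal_singleton intro: is_ideal_mult_left[OF is_ideal_m])
  then have "derived_complete (gen_ideal (insert (of_nat p) (gen_ideal {d})))"
    unfolding derived_complete_def using adically_complete_imp_derived_complete_elem[OF assms(2)] by blast
  moreover have "of_nat p \<in> gen_ideal (gen_ideal {d} \<union> frob p \<delta> ` gen_ideal {d})"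
    unfolding gen_ideal_principal_union_frob[OF delta]
    by (rule distinguished_imp_p_mem_gen_ideal_frob[OF p_pos assms(4)])
  ultimately show ?thesis
    unfolding orientable_prism_def prism_def
    using is_ideal_gen_ideal locally_free_rank_one_principal[OF \<open>d \<noteq> 0\<close>] by blast
qed

locale local_delta_ring_with_generators = local_delta_ring +
  fixes X :: "'a set"
  assumes m_eq: "m = gen_ideal (insert (of_nat p) X)"
    and delta_generators: "\<And>s. s \<in> X \<Longrightarrow> \<delta> s \<in> m"
begin

lemma gen_ideal_generators_subset_delta_ideal: "gen_ideal X \<subseteq> delta_ideal"
proof (rule gen_ideal_least[OF is_ideal_delta_ideal])
  show "X \<subseteq> delta_ideal"
    using gen_ideal_generators[of "insert (of_nat p) X"] delta_generators
    unfolding delta_ideal_def m_eq[symmetric] by blast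
qed

lemma p_minus_distinguished:
  assumes "f \<in> gen_ideal X"
  shows "of_nat p - f \<in> m" "distinguished \<delta> (of_nat p - f)"
proof -
  have f: "f \<in> delta_ideal"
    using assms gen_ideal_generators_subset_delta_ideal by blast
  then show "of_nat p - f \<in> m"
    using p_mem is_ideal_diff[OF is_ideal_m] unfolding delta_ideal_def by blast
  moreover have "of_nat p - f \<notin> delta_ideal"
    using f p_not_mem_delta_ideal is_ideal_add[OF is_ideal_delta_ideal] by (metis diff_add_cancel)
  ultimately show "distinguished \<delta> (of_nat p - f)"
    using distinguished_iff_not_mem_delta_ideal by blast
qed

lemma distinguished_imp_generator_p_minus:
  assumes "d \<in> m" "distinguished \<delta> d"
  shows "\<exists>f\<in>gen_ideal X. gen_ideal {d} = gen_ideal {of_nat p - f}"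
proof -
  obtain a g where g: "g \<in> gen_ideal X" and d: "d = a * of_nat p + g"
    using assms(1) unfolding m_eq by (rule gen_ideal_insertE)
  have "a \<notin> m"
  proof
    assume "a \<in> m"
    then have "d \<in> delta_ideal"
      unfolding d using mult_mem_delta_ideal[OF _ p_mem] g gen_ideal_generators_subset_delta_ideal
        is_ideal_add[OF is_ideal_delta_ideal] by blast
    then show False
      using assms distinguished_iff_not_mem_delta_ideal by blast
  qed
  then have "unit_elem a"
    using local_ring_unit_iff[OF local_m] by blast
  then obtain b where "a * b = 1"
    unfolding unit_elem_def by blast
  then have "d = a * (of_nat p - - (b * g))"
    unfolding d by (simp add: distrib_left mult.assoc[symmetric])
  moreover have "- (b * g) \<in> gen_ideal X"
    using is_ideal_mult_left[OF is_ideal_gen_ideal g, of "- b"] by simp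
  ultimately show ?thesis
    using gen_ideal_singleton_unit_mult[OF \<open>unit_elem a\<close>] by metis
qed

end

theorem lemma5p1:
  fixes p :: nat and \<delta> :: "'a::idom \<Rightarrow> 'a" and m :: "'a set"
    and n :: nat and x :: "nat \<Rightarrow> 'a" and I :: "'a set"
  assumes "prime p"
    and "Zp_local_algebra p TYPE('a)"
    and "noetherian_ring TYPE('a)"
    and "local_ring_with m"
    and "adically_complete m"
    and "delta_structure p \<delta>"
    and "m = gen_ideal (insert (of_nat p) (x ` {1..n}))"
    and "\<forall>i\<in>{1..n}. \<delta> (x i) \<in> m"
    and "is_ideal I"
  shows "(orientable_prism p \<delta> I \<longleftrightarrow> (\<exists>d\<in>m. distinguished \<delta> d \<and> I = gen_ideal {d}))
       \<and> ((\<exists>d\<in>m. distinguished \<delta> d \<and> I = gen_ideal {d}) \<longleftrightarrow>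
            (\<exists>f\<in>gen_ideal (x ` {1..n}). I = gen_ideal {of_nat p - f}))"
proof -
  interpret local_delta_ring_with_generators p \<delta> m "x ` {1..n}"
  proof
    show "of_nat p \<in> m"
      unfolding assms(7) using gen_ideal_generators by blast
  qed (use assms in auto)
  have "orientable_prism p \<delta> I \<longleftrightarrow> (\<exists>d\<in>m. distinguished \<delta> d \<and> I = gen_ideal {d})"
    using orientable_prism_imp_distinguished
      distinguished_imp_orientable_prism[OF local_delta_ring_axioms \<open>adically_complete m\<close>] by blast
  moreover have "(\<exists>d\<in>m. distinguished \<delta> d \<and> I = gen_ideal {d}) \<longleftrightarrow>
      (\<exists>f\<in>gen_ideal (x ` {1..n}). I = gen_ideal {of_nat p - f})"
    using distinguished_imp_generator_p_minus p_minus_distinguished by blast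
  ultimately show ?thesis ..
qed

end
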